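(* Let $G$ be a strongly connected doubly stochasticable digraph of order $n\in\mathbb{Z}_{>0}$ with DS-character $\operatorname{ds}(G)$. Then for every integer $C\geq\operatorname{ds}(G)$ there exists a weight assignment $A_{\mathrm{wb}}\in\mathbb{Z}^{n\times n}_{\geq0}$ that makes $G$ a $C$-regular digraph.
   Context: A digraph $G=(V,E)$, $V=\{v_1,\dots,v_n\}$, $E\subseteq V\times V$ (self-loops allowed); strongly connected means a directed path exists between every ordered pair of distinct vertices. An adjacency matrix (weight assignment) for $G$ is $A\in\mathbb{R}^{n\times n}_{\geq0}$ with $a_{ij}>0$ iff $(v_i,v_j)\in E$; $G$ is doubly stochasticable if it admits one with all row and column sums $1$. $G$ with weights $A$ is $C$-regular if $G$ is strongly connected and all row sums and all column sums of $A$ equal $C$. A cycle is a directed path $v_{i_1},\dots,v_{i_k},v_{i_1}$ with distinct $v_{i_1},\dots,v_{i_k}$ (self-loops are cycles), viewed as a subdigraph; $\mathcal{C}(G)$ is the set of subdigraphs that are a single edgeless vertex, a cycle, or a union of pairwise vertex-disjoint cycles; a family generates $G$ if the union of vertex sets is $V$ and of edge sets is $E$. $\operatorname{ds}(G)$ is the minimum cardinality of a subset of $\mathcal{C}(G)$ generating $G$ all of whose elements contain every vertex of $G$. *)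

theory Defs
  imports Complex_Main
begin

definition digraph :: "nat \<Rightarrow> (nat \<times> nat) set \<Rightarrow> bool" where
  "digraph n E \<longleftrightarrow> E \<subseteq> {0..<n} \<times> {0..<n}"

definition strongly_connected :: "nat \<Rightarrow> (nat \<times> nat) set \<Rightarrow> bool" where
  "strongly_connected n E \<longleftrightarrow>
     (\<forall>i<n. \<forall>j<n. i \<noteq> j \<longrightarrow> (i, j) \<in> E\<^sup>+)"

definition is_adjacency :: "nat \<Rightarrow> (nat \<times> nat) set \<Rightarrow> (nat \<Rightarrow> nat \<Rightarrow> 'a::linordered_idom) \<Rightarrow> bool" where
  "is_adjacency n E A \<longleftrightarrow>
     (\<forall>i<n. \<forall>j<n. 0 \<le> A i j \<and> (0 < A i j \<longleftrightarrow> (i, j) \<in> E))"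

definition doubly_stochasticable :: "nat \<Rightarrow> (nat \<times> nat) set \<Rightarrow> bool" where
  "doubly_stochasticable n E \<longleftrightarrow>
     (\<exists>A :: nat \<Rightarrow> nat \<Rightarrow> real. is_adjacency n E A \<and>
        (\<forall>i<n. (\<Sum>j<n. A i j) = 1) \<and> (\<forall>j<n. (\<Sum>i<n. A i j) = 1))"

definition regular :: "nat \<Rightarrow> (nat \<times> nat) set \<Rightarrow> (nat \<Rightarrow> nat \<Rightarrow> 'a::linordered_idom) \<Rightarrow> 'a \<Rightarrow> bool" where
  "regular n E A C \<longleftrightarrow> strongly_connected n E \<and>
     (\<forall>i<n. (\<Sum>j<n. A i j) = C) \<and> (\<forall>j<n. (\<Sum>i<n. A i j) = C)"

text \<open>A cycle v_1,...,v_k,v_1 with distinct v_i, viewed as a subdigraph (self-loops are cycles).\<close>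
definition is_cycle :: "nat set \<times> (nat \<times> nat) set \<Rightarrow> bool" where
  "is_cycle H \<longleftrightarrow> (\<exists>vs. vs \<noteq> [] \<and> distinct vs \<and> fst H = set vs \<and>
      snd H = {(vs ! i, vs ! (Suc i mod length vs)) | i. i < length vs})"

definition subdigraph :: "nat \<Rightarrow> (nat \<times> nat) set \<Rightarrow> nat set \<times> (nat \<times> nat) set \<Rightarrow> bool" where
  "subdigraph n E H \<longleftrightarrow> fst H \<subseteq> {0..<n} \<and> snd H \<subseteq> E"

definition cycle_subgraphs :: "nat \<Rightarrow> (nat \<times> nat) set \<Rightarrow> (nat set \<times> (nat \<times> nat) set) set" where
  "cycle_subgraphs n E = {H. subdigraph n E H \<and>
     ((\<exists>v. H = ({v}, {})) \<or>
      (\<exists>F. finite F \<and> F \<noteq> {} \<and> (\<forall>c\<in>F. is_cycle c) \<and>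
          (\<forall>c\<in>F. \<forall>d\<in>F. c \<noteq> d \<longrightarrow> fst c \<inter> fst d = {}) \<and>
          H = (\<Union>(fst ` F), \<Union>(snd ` F))))}"

definition generates :: "nat \<Rightarrow> (nat \<times> nat) set \<Rightarrow> (nat set \<times> (nat \<times> nat) set) set \<Rightarrow> bool" where
  "generates n E S \<longleftrightarrow> \<Union>(fst ` S) = {0..<n} \<and> \<Union>(snd ` S) = E"

definition ds :: "nat \<Rightarrow> (nat \<times> nat) set \<Rightarrow> nat" where
  "ds n E = (LEAST k. \<exists>S. S \<subseteq> cycle_subgraphs n E \<and> finite S \<and> card S = k \<and>
      generates n E S \<and> (\<forall>H\<in>S. fst H = {0..<n}))"

end

theory Submission
  imports Defs "HOL-Combinatorics.Cycles"
begin

text \<open>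
  For a doubly stochastic matrix with support \<open>E\<close>, every edge \<open>(i, j)\<close> lies on a permutation
  whose graph is contained in \<open>E\<close>: Hall's condition for matching the rows other than \<open>i\<close> to
  the columns other than \<open>j\<close> follows by comparing row and column masses. The graphs of these
  permutations are spanning elements of \<open>C(G)\<close> that generate \<open>G\<close>, so \<open>ds(G)\<close> is attained.
  Every spanning element of \<open>C(G)\<close> with an edge is a 1-factor (each vertex has exactly one
  out- and one in-neighbour), so its 0/1 indicator matrix has all line sums 1. Summing the
  indicators of the at most \<open>ds(G) \<le> C\<close> distinct edge sets of a minimal generating family and
  adding \<open>C\<close> minus their number extra copies of one of them gives nonnegative integer weights
  with support \<open>E\<close> and all line sums \<open>C\<close>.
\<close>

section \<open>Hall's marriage theorem\<close>

definition hall_condition :: "'i set \<Rightarrow> ('i \<Rightarrow> 'a set) \<Rightarrow> bool" where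
  "hall_condition I A \<longleftrightarrow> (\<forall>K\<subseteq>I. card K \<le> card (\<Union>(A ` K)))"

lemma hall_condition_subset: "hall_condition I A \<Longrightarrow> J \<subseteq> I \<Longrightarrow> hall_condition J A"
  unfolding hall_condition_def by blast

lemma hall_condition_Diff_tight:
  assumes fin: "finite I" "\<forall>i\<in>I. finite (A i)" and hall: "hall_condition I A"
    and K: "K \<subseteq> I" "card (\<Union>(A ` K)) = card K"
  shows "hall_condition (I - K) (\<lambda>i. A i - \<Union>(A ` K))"
  unfolding hall_condition_def
proof (intro allI impI)
  fix L assume L: "L \<subseteq> I - K"
  have fin_L: "finite L" and fin_K: "finite K" using L K fin(1) finite_subset by blast+
  have fin_UN: "finite (\<Union>(A ` (L \<union> K)))"
    using L K fin by (intro finite_UN_I) (auto intro: finite_subset)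
  have "card L + card K = card (L \<union> K)"
    using L fin_L fin_K by (subst card_Un_disjoint) auto
  also have "\<dots> \<le> card (\<Union>(A ` (L \<union> K)))"
    using hall L K unfolding hall_condition_def by (metis Diff_subset Un_least subset_trans)
  also have "\<dots> = card (\<Union>(A ` (L \<union> K)) - \<Union>(A ` K)) + card (\<Union>(A ` K))"
    using fin_UN card_mono[OF fin_UN, of "\<Union>(A ` K)"]
    by (simp add: card_Diff_subset finite_subset)
  also have "\<Union>(A ` (L \<union> K)) - \<Union>(A ` K) = (\<Union>i\<in>L. A i - \<Union>(A ` K))" by auto
  finally show "card L \<le> card (\<Union>i\<in>L. A i - \<Union>(A ` K))" using K(2) by simp
qed

lemma hall_condition_remove:
  assumes hall: "hall_condition I A"
    and slack: "\<forall>K\<subseteq>I. K \<noteq> {} \<longrightarrow> K \<noteq> I \<longrightarrow> card K \<noteq> card (\<Union>(A ` K))"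
    and "i \<in> I"
  shows "hall_condition (I - {i}) (\<lambda>k. A k - {x})"
  unfolding hall_condition_def
proof (intro allI impI)
  fix L assume L: "L \<subseteq> I - {i}"
  show "card L \<le> card (\<Union>k\<in>L. A k - {x})"
  proof (cases "L = {}")
    case False
    have "L \<subseteq> I" "L \<noteq> I" using L \<open>i \<in> I\<close> by auto
    with hall slack False have "card L < card (\<Union>(A ` L))"
      unfolding hall_condition_def by (simp add: le_neq_implies_less)
    moreover have "card (\<Union>(A ` L)) - 1 \<le> card (\<Union>(A ` L) - {x})"
      by (simp add: card_Diff_singleton_if)
    ultimately have "card L \<le> card (\<Union>(A ` L) - {x})" by linarith
    also have "\<Union>(A ` L) - {x} = (\<Union>k\<in>L. A k - {x})" by auto
    finally show ?thesis .
  qed simp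
qed

theorem hall_marriage:
  assumes "finite I" "\<forall>i\<in>I. finite (A i)" "hall_condition I A"
  shows "\<exists>f. inj_on f I \<and> (\<forall>i\<in>I. f i \<in> A i)"
  using assms
proof (induction "card I" arbitrary: I A rule: less_induct)
  case less
  \<comment> \<open>Either some proper subfamily is critical and is matched separately from the rest, or all
    have slack and any choice for a single index leaves Hall's condition intact.\<close>
  show ?case
  proof (cases "\<exists>K\<subseteq>I. K \<noteq> {} \<and> K \<noteq> I \<and> card K = card (\<Union>(A ` K))")
    case True
    then obtain K where K: "K \<subseteq> I" "K \<noteq> {}" "K \<noteq> I" "card K = card (\<Union>(A ` K))"
      by blast
    have "finite K" using K(1) less.prems(1) by (rule finite_subset)
    have card_less: "card K < card I" "card (I - K) < card I"
      using K(1-3) less.prems(1) \<open>finite K\<close> card_Diff_subset[of K I] card_gt_0_iff[of K]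
        psubset_card_mono[of I K] by auto
    have "\<forall>i\<in>K. finite (A i)" "hall_condition K A"
      using less.prems K(1) hall_condition_subset by auto
    from less.hyps[OF card_less(1) \<open>finite K\<close> this]
    obtain f where f: "inj_on f K" "\<forall>i\<in>K. f i \<in> A i" by blast
    have "finite (I - K)" "\<forall>i\<in>I - K. finite (A i - \<Union>(A ` K))"
      using less.prems by auto
    from less.hyps[OF card_less(2) this hall_condition_Diff_tight[OF less.prems K(1) K(4)[symmetric]]]
    obtain g where g: "inj_on g (I - K)" "\<forall>i\<in>I - K. g i \<in> A i - \<Union>(A ` K)" by blast
    have "inj_on (\<lambda>i. if i \<in> K then f i else g i) (K \<union> (I - K))"
      by (rule inj_on_disjoint_Un) (use f g in auto)
    moreover have "K \<union> (I - K) = I" using K(1) by blast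
    ultimately show ?thesis using f g by (intro exI[of _ "\<lambda>i. if i \<in> K then f i else g i"]) auto
  next
    case no_tight: False
    show ?thesis
    proof (cases "I = {}")
      case False
      then obtain i where "i \<in> I" by blast
      then have "card {i} \<le> card (\<Union>(A ` {i}))"
        using less.prems(3) unfolding hall_condition_def by blast
      then obtain x where "x \<in> A i" by fastforce
      have "card (I - {i}) < card I" using less.prems(1) \<open>i \<in> I\<close> by (rule card_Diff1_less)
      moreover have "finite (I - {i})" "\<forall>k\<in>I - {i}. finite (A k - {x})"
        using less.prems by auto
      moreover have "hall_condition (I - {i}) (\<lambda>k. A k - {x})"
        using hall_condition_remove[OF less.prems(3) _ \<open>i \<in> I\<close>] no_tight by blast
      ultimately have "\<exists>g. inj_on g (I - {i}) \<and> (\<forall>k\<in>I - {i}. g k \<in> A k - {x})"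
        by (rule less.hyps)
      then obtain g where g: "inj_on g (I - {i})" "\<forall>k\<in>I - {i}. g k \<in> A k - {x}" by blast
      have "inj_on (\<lambda>k. if k \<in> I - {i} then g k else x) ((I - {i}) \<union> {i})"
        by (rule inj_on_disjoint_Un) (use g in auto)
      moreover have "(I - {i}) \<union> {i} = I" using \<open>i \<in> I\<close> by blast
      ultimately show ?thesis using g \<open>x \<in> A i\<close>
        by (intro exI[of _ "\<lambda>k. if k \<in> I - {i} then g k else x"]) auto
    qed simp
  qed
qed

section \<open>Permutations through the edges of a doubly stochastic pattern\<close>

lemma doubly_stochastic_hall_condition:
  fixes a :: "nat \<Rightarrow> nat \<Rightarrow> real"
  assumes nonneg: "\<And>k l. k < n \<Longrightarrow> l < n \<Longrightarrow> 0 \<le> a k l"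
    and rows: "\<And>k. k < n \<Longrightarrow> (\<Sum>l<n. a k l) = 1"
    and cols: "\<And>l. l < n \<Longrightarrow> (\<Sum>k<n. a k l) = 1"
    and ij: "i < n" "j < n" "0 < a i j"
  shows "hall_condition ({..<n} - {i}) (\<lambda>k. {l. l < n \<and> l \<noteq> j \<and> 0 < a k l})"
  unfolding hall_condition_def
proof (intro allI impI)
  fix K assume K: "K \<subseteq> {..<n} - {i}"
  define N where "N = (\<Union>k\<in>K. {l. l < n \<and> l \<noteq> j \<and> 0 < a k l})"
  have N: "N \<subseteq> {..<n}" "j \<notin> N" and "finite N" unfolding N_def by (auto intro: finite_subset)
  have row_support: "(\<Sum>l<n. a k l) = (\<Sum>l\<in>N. a k l) + a k j" if "k \<in> K" for k
  proof -
    have "(\<Sum>l<n. a k l) = (\<Sum>l\<in>insert j N. a k l)"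
    proof (rule sum.mono_neutral_right)
      show "\<forall>l\<in>{..<n} - insert j N. a k l = 0"
        using that K nonneg unfolding N_def by (force simp: order_less_le)
    qed (use N ij in auto)
    then show ?thesis using N \<open>finite N\<close> by (simp add: add.commute)
  qed
  \<comment> \<open>The rows of \<open>K\<close> carry mass \<open>|K|\<close>, all of it in the columns \<open>N \<union> {j}\<close>; the columns
    of \<open>N\<close> carry at most \<open>|N|\<close> and column \<open>j\<close> carries at most \<open>1 - a i j < 1\<close> outside row \<open>i\<close>.\<close>
  have "real (card K) = (\<Sum>k\<in>K. \<Sum>l<n. a k l)" using rows K by (simp add: subset_iff)
  also have "\<dots> = (\<Sum>l\<in>N. \<Sum>k\<in>K. a k l) + (\<Sum>k\<in>K. a k j)"
    using row_support by (simp add: sum.distrib sum.swap[of _ K N])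
  also have "(\<Sum>l\<in>N. \<Sum>k\<in>K. a k l) \<le> (\<Sum>l\<in>N. \<Sum>k<n. a k l)"
    using K N nonneg by (intro sum_mono sum_mono2) auto
  also have "\<dots> = real (card N)" using cols N by (simp add: subset_iff)
  also have "(\<Sum>k\<in>K. a k j) \<le> (\<Sum>k\<in>{..<n} - {i}. a k j)"
    using K nonneg ij by (intro sum_mono2) auto
  also have "\<dots> = 1 - a i j" using cols ij by (simp add: sum_diff1)
  finally show "card K \<le> card N" using ij by linarith
qed

lemma doubly_stochastic_permutation_through:
  fixes a :: "nat \<Rightarrow> nat \<Rightarrow> real"
  assumes nonneg: "\<And>k l. k < n \<Longrightarrow> l < n \<Longrightarrow> 0 \<le> a k l"
    and rows: "\<And>k. k < n \<Longrightarrow> (\<Sum>l<n. a k l) = 1"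
    and cols: "\<And>l. l < n \<Longrightarrow> (\<Sum>k<n. a k l) = 1"
    and ij: "i < n" "j < n" "0 < a i j"
  shows "\<exists>\<sigma>. \<sigma> permutes {..<n} \<and> \<sigma> i = j \<and> (\<forall>k<n. 0 < a k (\<sigma> k))"
proof -
  obtain f where f: "inj_on f ({..<n} - {i})"
    "\<forall>k\<in>{..<n} - {i}. f k \<in> {l. l < n \<and> l \<noteq> j \<and> 0 < a k l}"
    using hall_marriage[OF _ _ doubly_stochastic_hall_condition[OF assms]] by auto
  define \<sigma> where "\<sigma> k = (if k \<in> {..<n} - {i} then f k else if k = i then j else k)" for k
  have "inj_on \<sigma> (({..<n} - {i}) \<union> {i})"
    unfolding \<sigma>_def by (rule inj_on_disjoint_Un) (use f in auto)
  moreover have "({..<n} - {i}) \<union> {i} = {..<n}" using ij by auto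
  moreover have "\<sigma> ` {..<n} \<subseteq> {..<n}" using f ij unfolding \<sigma>_def by auto
  ultimately have "bij_betw \<sigma> {..<n} {..<n}"
    by (simp add: bij_betw_def endo_inj_surj)
  then have "\<sigma> permutes {..<n}"
    by (rule bij_imp_permutes) (use ij in \<open>simp add: \<sigma>_def\<close>)
  moreover have "\<forall>k<n. 0 < a k (\<sigma> k)" using f ij unfolding \<sigma>_def by auto
  ultimately show ?thesis by (auto simp: \<sigma>_def)
qed

lemma doubly_stochasticable_edge_permutation:
  assumes "digraph n E" "doubly_stochasticable n E" "(i, j) \<in> E"
  shows "\<exists>\<sigma>. \<sigma> permutes {..<n} \<and> \<sigma> i = j \<and> (\<forall>k<n. (k, \<sigma> k) \<in> E)"
proof -
  obtain a :: "nat \<Rightarrow> nat \<Rightarrow> real" where a: "is_adjacency n E a"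
    "\<forall>k<n. (\<Sum>l<n. a k l) = 1" "\<forall>l<n. (\<Sum>k<n. a k l) = 1"
    using assms(2) unfolding doubly_stochasticable_def by blast
  have ij: "i < n" "j < n" using assms(1,3) unfolding digraph_def by auto
  then have "0 < a i j" using a(1) assms(3) unfolding is_adjacency_def by blast
  with a ij obtain \<sigma> where "\<sigma> permutes {..<n}" "\<sigma> i = j" "\<forall>k<n. 0 < a k (\<sigma> k)"
    using doubly_stochastic_permutation_through[of n a i j] unfolding is_adjacency_def by auto
  moreover have "\<forall>k<n. \<sigma> k < n" using permutes_in_image[OF \<open>\<sigma> permutes {..<n}\<close>] by simp
  ultimately show ?thesis using a(1) unfolding is_adjacency_def by blast
qed

lemma doubly_stochasticable_out_edge:
  assumes "doubly_stochasticable n E" "i < n"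
  shows "\<exists>j. (i, j) \<in> E"
proof -
  obtain a :: "nat \<Rightarrow> nat \<Rightarrow> real" where a: "is_adjacency n E a" "(\<Sum>l<n. a i l) = 1"
    using assms unfolding doubly_stochasticable_def by blast
  then obtain j where "j < n" "a i j \<noteq> 0" by (metis lessThan_iff sum.neutral zero_neq_one)
  then show ?thesis using a(1) assms(2) unfolding is_adjacency_def by (metis order_le_neq_trans)
qed

section \<open>1-factors\<close>

definition one_factor :: "'a set \<Rightarrow> ('a \<times> 'a) set \<Rightarrow> bool" where
  "one_factor V R \<longleftrightarrow> R \<subseteq> V \<times> V \<and> (\<forall>x\<in>V. \<exists>!y. (x, y) \<in> R) \<and> (\<forall>y\<in>V. \<exists>!x. (x, y) \<in> R)"

lemma one_factor_permutation_graph: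
  assumes "\<pi> permutes V"
  shows "one_factor V {(x, \<pi> x) | x. x \<in> V}"
  unfolding one_factor_def
proof (intro conjI ballI)
  show "{(x, \<pi> x) | x. x \<in> V} \<subseteq> V \<times> V" using permutes_in_image[OF assms] by auto
  show "\<exists>!y. (x, y) \<in> {(x, \<pi> x) | x. x \<in> V}" if "x \<in> V" for x using that by auto
  show "\<exists>!x. (x, y) \<in> {(x, \<pi> x) | x. x \<in> V}" if "y \<in> V" for y
  proof (rule ex1I[of _ "inv \<pi> y"])
    show "(inv \<pi> y, y) \<in> {(x, \<pi> x) | x. x \<in> V}"
      using that permutes_inverses(1)[OF assms] permutes_in_image[OF permutes_inv[OF assms]] by auto
  qed (auto simp: permutes_inverses(2)[OF assms])
qed

lemma is_cycle_one_factor: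
  assumes "is_cycle c"
  shows "one_factor (fst c) (snd c)"
proof -
  obtain vs where vs: "distinct vs" "fst c = set vs"
    "snd c = {(vs ! i, vs ! (Suc i mod length vs)) | i. i < length vs}"
    using assms unfolding is_cycle_def by blast
  have "map (cycle_of_list vs) vs = rotate1 vs" using cyclic_rotation[OF vs(1), of 1] by simp
  then have "cycle_of_list vs (vs ! i) = vs ! (Suc i mod length vs)" if "i < length vs" for i
    using that by (metis nth_map nth_rotate1)
  then have "snd c = {(x, cycle_of_list vs x) | x. x \<in> fst c}"
    unfolding vs(2,3) by (auto simp: in_set_conv_nth)
  then show ?thesis using one_factor_permutation_graph[OF cycle_permutes[of vs]] vs(2) by simp
qed

lemma one_factor_converse: "one_factor V (R\<inverse>) \<longleftrightarrow> one_factor V R"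
  unfolding one_factor_def by auto

lemma ex1_successor_Union_disjoint:
  assumes "c \<in> F" "x \<in> V c" "\<exists>!y. (x, y) \<in> R c" "\<forall>d\<in>F. R d \<subseteq> V d \<times> V d"
    and "\<forall>d\<in>F. d \<noteq> c \<longrightarrow> V d \<inter> V c = {}"
  shows "\<exists>!y. (x, y) \<in> (\<Union>d\<in>F. R d)"
proof -
  obtain y where y: "(x, y) \<in> R c" "\<And>y'. (x, y') \<in> R c \<Longrightarrow> y' = y" using assms(3) by blast
  have "y' = y" if "(x, y') \<in> R d" "d \<in> F" for d y'
  proof -
    have "x \<in> V d" using that assms(4) by blast
    then have "d = c" using assms(2,5) that(2) by blast
    then show ?thesis using that(1) y(2) by simp
  qed
  then show ?thesis using y(1) assms(1) by blast
qed

lemma one_factor_Union_disjoint: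
  assumes factors: "\<forall>c\<in>F. one_factor (V c) (R c)"
    and disjoint: "\<forall>c\<in>F. \<forall>d\<in>F. c \<noteq> d \<longrightarrow> V c \<inter> V d = {}"
  shows "one_factor (\<Union>c\<in>F. V c) (\<Union>c\<in>F. R c)"
proof -
  have succ: "\<forall>x\<in>(\<Union>c\<in>F. V c). \<exists>!y. (x, y) \<in> (\<Union>c\<in>F. S c)"
    if "\<forall>c\<in>F. one_factor (V c) (S c)" for S
  proof
    fix x assume "x \<in> (\<Union>c\<in>F. V c)"
    then obtain c where c: "c \<in> F" "x \<in> V c" by blast
    have "\<exists>!y. (x, y) \<in> S c" "\<forall>d\<in>F. S d \<subseteq> V d \<times> V d"
      using that c unfolding one_factor_def by blast+
    moreover have "\<forall>d\<in>F. d \<noteq> c \<longrightarrow> V d \<inter> V c = {}" using disjoint c(1) by blast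
    ultimately show "\<exists>!y. (x, y) \<in> (\<Union>c\<in>F. S c)" by (rule ex1_successor_Union_disjoint[where V = V, OF c])
  qed
  have "\<forall>c\<in>F. one_factor (V c) ((R c)\<inverse>)" using factors by (simp add: one_factor_converse)
  then have "\<forall>y\<in>(\<Union>c\<in>F. V c). \<exists>!x. (y, x) \<in> (\<Union>c\<in>F. (R c)\<inverse>)" by (rule succ)
  then have "\<forall>y\<in>(\<Union>c\<in>F. V c). \<exists>!x. (x, y) \<in> (\<Union>c\<in>F. R c)" by simp
  moreover have "(\<Union>c\<in>F. R c) \<subseteq> (\<Union>c\<in>F. V c) \<times> (\<Union>c\<in>F. V c)"
    using factors unfolding one_factor_def by blast
  ultimately show ?thesis using succ[OF factors] unfolding one_factor_def by (intro conjI)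
qed

lemma cycle_subgraphs_one_factor:
  assumes "H \<in> cycle_subgraphs n E" "snd H \<noteq> {}"
  shows "one_factor (fst H) (snd H)"
proof -
  obtain F where F: "\<forall>c\<in>F. is_cycle c" "\<forall>c\<in>F. \<forall>d\<in>F. c \<noteq> d \<longrightarrow> fst c \<inter> fst d = {}"
    "H = (\<Union>(fst ` F), \<Union>(snd ` F))"
    using assms unfolding cycle_subgraphs_def mem_Collect_eq by (metis snd_conv)
  then show ?thesis using one_factor_Union_disjoint[of F fst snd] is_cycle_one_factor by simp
qed

lemma one_factor_row_sum:
  fixes n :: nat
  assumes "one_factor {..<n} R" "i < n"
  shows "(\<Sum>j<n. of_bool ((i, j) \<in> R)) = (1 :: 'a :: semiring_1)"
proof -
  have "\<exists>!y. (i, y) \<in> R" "R \<subseteq> {..<n} \<times> {..<n}"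
    using assms unfolding one_factor_def by simp_all
  then obtain y where "(i, y) \<in> R" "\<And>y'. (i, y') \<in> R \<Longrightarrow> y' = y" "y < n" by blast
  then have "{..<n} \<inter> {j. (i, j) \<in> R} = {y}" by blast
  then show ?thesis by simp
qed

lemma one_factor_column_sum:
  fixes n :: nat
  assumes "one_factor {..<n} R" "j < n"
  shows "(\<Sum>i<n. of_bool ((i, j) \<in> R)) = (1 :: 'a :: semiring_1)"
  using one_factor_row_sum[of n "R\<inverse>" j] assms by (simp add: one_factor_converse)

lemma regular_weights_of_one_factors:
  fixes n :: nat and C :: int
  assumes "finite \<F>" "\<F> \<noteq> {}" "\<forall>R\<in>\<F>. one_factor {..<n} R" "int (card \<F>) \<le> C"
  shows "\<exists>A :: nat \<Rightarrow> nat \<Rightarrow> int. is_adjacency n (\<Union>\<F>) A \<and>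
    (\<forall>i<n. (\<Sum>j<n. A i j) = C) \<and> (\<forall>j<n. (\<Sum>i<n. A i j) = C)"
proof -
  obtain R\<^sub>0 where "R\<^sub>0 \<in> \<F>" using assms(2) by blast
  define A where "A i j = (\<Sum>R\<in>\<F>. of_bool ((i, j) \<in> R)) + (C - card \<F>) * of_bool ((i, j) \<in> R\<^sub>0)"
    for i j :: nat
  have "(\<Sum>j<n. A i j) = C" if "i < n" for i
  proof -
    have "(\<Sum>j<n. A i j) = (\<Sum>R\<in>\<F>. \<Sum>j<n. of_bool ((i, j) \<in> R)) + (C - card \<F>) * (\<Sum>j<n. of_bool ((i, j) \<in> R\<^sub>0))"
      unfolding A_def by (simp add: sum.distrib sum_distrib_left sum.swap[of _ \<F>])
    also have "\<dots> = C"
      using assms(3) \<open>R\<^sub>0 \<in> \<F>\<close> that by (simp add: one_factor_row_sum del: sum_of_bool_eq)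
    finally show ?thesis .
  qed
  moreover have "(\<Sum>i<n. A i j) = C" if "j < n" for j
  proof -
    have "(\<Sum>i<n. A i j) = (\<Sum>R\<in>\<F>. \<Sum>i<n. of_bool ((i, j) \<in> R)) + (C - card \<F>) * (\<Sum>i<n. of_bool ((i, j) \<in> R\<^sub>0))"
      unfolding A_def by (simp add: sum.distrib sum_distrib_left sum.swap[of _ \<F>])
    also have "\<dots> = C"
      using assms(3) \<open>R\<^sub>0 \<in> \<F>\<close> that by (simp add: one_factor_column_sum del: sum_of_bool_eq)
    finally show ?thesis .
  qed
  moreover have "is_adjacency n (\<Union>\<F>) A"
    unfolding is_adjacency_def
  proof (intro allI impI conjI)
    fix i j
    have "0 \<le> (\<Sum>R\<in>\<F>. of_bool ((i, j) \<in> R) :: int)" by (simp add: sum_nonneg)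
    moreover have "0 \<le> (C - card \<F>) * of_bool ((i, j) \<in> R\<^sub>0)" using assms(4) by simp
    moreover have "(\<Sum>R\<in>\<F>. of_bool ((i, j) \<in> R) :: int) = 0 \<longleftrightarrow> (i, j) \<notin> \<Union>\<F>"
      using assms(1) by auto
    moreover have "(i, j) \<in> R\<^sub>0 \<Longrightarrow> (i, j) \<in> \<Union>\<F>" using \<open>R\<^sub>0 \<in> \<F>\<close> by blast
    ultimately show "0 \<le> A i j" "0 < A i j \<longleftrightarrow> (i, j) \<in> \<Union>\<F>"
      unfolding A_def by auto
  qed
  ultimately show ?thesis by blast
qed

section \<open>Permutation graphs as unions of disjoint cycles\<close>

lemma funpow_mod_least_power:
  assumes "permutation p"
  shows "(p ^^ (q mod least_power p a)) a = (p ^^ q) a"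
proof -
  have "least_power p a dvd q - q mod least_power p a" by (rule dvd_minus_mod)
  then have "(p ^^ (q - q mod least_power p a)) a = a" by (simp only: least_power_dvd[OF assms])
  then show ?thesis
    by (metis add_diff_inverse_nat funpow_add mod_less_eq_dividend not_le o_apply)
qed

definition orbit_cycle :: "(nat \<Rightarrow> nat) \<Rightarrow> nat \<Rightarrow> nat set \<times> (nat \<times> nat) set" where
  "orbit_cycle p a = (set (support p a), {(x, p x) | x. x \<in> set (support p a)})"

lemma is_cycle_orbit_cycle:
  assumes "permutation p"
  shows "is_cycle (orbit_cycle p a)"
proof -
  define vs where "vs = support p a"
  have "length vs > 0" using least_power_of_permutation(2)[OF assms] by (simp add: vs_def)
  have "p (vs ! k) = vs ! (Suc k mod length vs)" if "k < length vs" for k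
    using that funpow_mod_least_power[OF assms, of "Suc k" a] by (simp add: vs_def)
  then have "{(x, p x) | x. x \<in> set vs} = {(vs ! k, vs ! (Suc k mod length vs)) | k. k < length vs}"
    by (auto simp: in_set_conv_nth)
  moreover have "distinct vs" using cycle_of_permutation[OF assms] by (simp add: vs_def)
  ultimately show ?thesis
    using \<open>length vs > 0\<close> unfolding is_cycle_def orbit_cycle_def vs_def[symmetric] by auto
qed

lemma permutation_graph_in_cycle_subgraphs:
  assumes "n > 0" and \<sigma>: "\<sigma> permutes {..<n}" and E: "\<forall>k<n. (k, \<sigma> k) \<in> E"
  shows "({0..<n}, {(k, \<sigma> k) | k. k < n}) \<in> cycle_subgraphs n E"
proof -
  have p: "permutation \<sigma>" using \<sigma> permutation_permutes by blast
  define F where "F = orbit_cycle \<sigma> ` {..<n}"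
  have orbit_in: "set (support \<sigma> a) \<subseteq> {..<n}" if "a < n" for a
    using that permutes_in_image[OF permutes_funpow[OF \<sigma>]] by auto
  have orbit_start: "a \<in> set (support \<sigma> a)" for a
    using least_power_of_permutation(2)[OF p, of a] by force
  have "\<Union>(fst ` F) = {0..<n}" "\<Union>(snd ` F) = {(k, \<sigma> k) | k. k < n}"
    unfolding F_def orbit_cycle_def using orbit_in orbit_start by fastforce+
  then have "({0..<n}, {(k, \<sigma> k) | k. k < n}) = (\<Union>(fst ` F), \<Union>(snd ` F))" by simp
  moreover have "\<forall>c\<in>F. \<forall>d\<in>F. c \<noteq> d \<longrightarrow> fst c \<inter> fst d = {}"
    using disjoint_support[OF p] unfolding F_def orbit_cycle_def disjoint_def by auto
  moreover have "finite F" "F \<noteq> {}" "\<forall>c\<in>F. is_cycle c"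
    using \<open>n > 0\<close> is_cycle_orbit_cycle[OF p] unfolding F_def by auto
  ultimately have "\<exists>F. finite F \<and> F \<noteq> {} \<and> (\<forall>c\<in>F. is_cycle c) \<and>
      (\<forall>c\<in>F. \<forall>d\<in>F. c \<noteq> d \<longrightarrow> fst c \<inter> fst d = {}) \<and>
      ({0..<n}, {(k, \<sigma> k) | k. k < n}) = (\<Union>(fst ` F), \<Union>(snd ` F))"
    by (intro exI[of _ F] conjI)
  moreover have "subdigraph n E ({0..<n}, {(k, \<sigma> k) | k. k < n})"
    unfolding subdigraph_def using E by auto
  ultimately show ?thesis unfolding cycle_subgraphs_def by (intro CollectI conjI disjI2)
qed

lemma ds_attained:
  assumes "n > 0" "digraph n E" "doubly_stochasticable n E"
  shows "\<exists>S. S \<subseteq> cycle_subgraphs n E \<and> finite S \<and> card S = ds n E \<and>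
    generates n E S \<and> (\<forall>H\<in>S. fst H = {0..<n})"
proof -
  \<comment> \<open>\<open>ds\<close> is a \<open>LEAST\<close>, meaningless unless some admissible family exists: we exhibit the
    graphs of permutations through every edge.\<close>
  have "\<forall>e\<in>E. \<exists>\<sigma>. \<sigma> permutes {..<n} \<and> \<sigma> (fst e) = snd e \<and> (\<forall>k<n. (k, \<sigma> k) \<in> E)"
    using doubly_stochasticable_edge_permutation[OF assms(2,3)] by auto
  then obtain \<sigma> where \<sigma>: "\<And>e. e \<in> E \<Longrightarrow>
      \<sigma> e permutes {..<n} \<and> \<sigma> e (fst e) = snd e \<and> (\<forall>k<n. (k, \<sigma> e k) \<in> E)"
    by metis
  define S where "S = (\<lambda>e. ({0..<n}, {(k, \<sigma> e k) | k. k < n})) ` E"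
  have E: "E \<subseteq> {..<n} \<times> {..<n}" using assms(2) unfolding digraph_def by auto
  then have "finite S" unfolding S_def by (meson finite_SigmaI finite_imageI finite_lessThan finite_subset)
  moreover have "S \<subseteq> cycle_subgraphs n E"
  proof -
    have "({0..<n}, {(k, \<sigma> e k) | k. k < n}) \<in> cycle_subgraphs n E" if "e \<in> E" for e
      using \<sigma>[OF that] permutation_graph_in_cycle_subgraphs[OF assms(1)] by simp
    then show ?thesis unfolding S_def by blast
  qed
  moreover have "generates n E S"
    unfolding generates_def
  proof
    have "E \<noteq> {}" using doubly_stochasticable_out_edge[OF assms(3,1)] by blast
    then show "\<Union>(fst ` S) = {0..<n}" unfolding S_def by simp
    show "\<Union>(snd ` S) = E"
    proof
      have "{(k, \<sigma> e k) | k. k < n} \<subseteq> E" if "e \<in> E" for e using \<sigma>[OF that] by blast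
      then show "\<Union>(snd ` S) \<subseteq> E" unfolding S_def by auto
      show "E \<subseteq> \<Union>(snd ` S)"
      proof
        fix e assume "e \<in> E"
        have "({0..<n}, {(k, \<sigma> e k) | k. k < n}) \<in> S" unfolding S_def using \<open>e \<in> E\<close> by (rule imageI)
        moreover have "e \<in> snd ({0..<n}, {(k, \<sigma> e k) | k. k < n})"
          using \<open>e \<in> E\<close> E \<sigma>[OF \<open>e \<in> E\<close>] by (cases e) auto
        ultimately show "e \<in> \<Union>(snd ` S)" by (rule UN_I)
      qed
    qed
  qed
  moreover have "\<forall>H\<in>S. fst H = {0..<n}" unfolding S_def by simp
  ultimately have "\<exists>k S. S \<subseteq> cycle_subgraphs n E \<and> finite S \<and> card S = k \<and>
      generates n E S \<and> (\<forall>H\<in>S. fst H = {0..<n})"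
    by blast
  then show ?thesis unfolding ds_def by (rule LeastI_ex)
qed

lemma ds_one_factor_cover:
  assumes "n > 0" "digraph n E" "doubly_stochasticable n E"
  obtains \<F> where "finite \<F>" "\<F> \<noteq> {}" "\<forall>R\<in>\<F>. one_factor {..<n} R" "\<Union>\<F> = E"
    "card \<F> \<le> ds n E"
proof -
  obtain S where S: "S \<subseteq> cycle_subgraphs n E" "finite S" "card S = ds n E" "generates n E S"
    "\<forall>H\<in>S. fst H = {0..<n}"
    using ds_attained[OF assms] by blast
  \<comment> \<open>An edgeless spanning element, possible only for \<open>n = 1\<close>, is not a 1-factor and is dropped.\<close>
  define \<F> where "\<F> = snd ` {H \<in> S. snd H \<noteq> {}}"
  have "finite \<F>" using S(2) unfolding \<F>_def by simp
  moreover have union: "\<Union>\<F> = E" using S(4) unfolding generates_def \<F>_def by auto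
  moreover have "\<F> \<noteq> {}"
    using union doubly_stochasticable_out_edge[OF assms(3,1)] by auto
  moreover have "one_factor {..<n} R" if R: "R \<in> \<F>" for R
  proof -
    obtain H where "H \<in> S" "snd H \<noteq> {}" "R = snd H" using R unfolding \<F>_def by blast
    then show ?thesis using cycle_subgraphs_one_factor[of H n E] S(1,5) by (auto simp: atLeast0LessThan)
  qed
  moreover have "card \<F> \<le> ds n E"
  proof -
    have "card \<F> \<le> card {H \<in> S. snd H \<noteq> {}}"
      unfolding \<F>_def by (rule card_image_le) (use S(2) in simp)
    also have "\<dots> \<le> card S" using S(2) by (intro card_mono) auto
    finally show ?thesis using S(3) by simp
  qed
  ultimately show ?thesis using that by blast
qed

theorem proposition3p13:
  fixes n :: nat and E :: "(nat \<times> nat) set" and C :: int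
  assumes "n > 0"
    and "digraph n E"
    and "strongly_connected n E"
    and "doubly_stochasticable n E"
    and "C \<ge> int (ds n E)"
  shows "\<exists>A :: nat \<Rightarrow> nat \<Rightarrow> int. is_adjacency n E A \<and> regular n E A C"
proof -
  obtain \<F> where \<F>: "finite \<F>" "\<F> \<noteq> {}" "\<forall>R\<in>\<F>. one_factor {..<n} R" "\<Union>\<F> = E"
    "card \<F> \<le> ds n E"
    using ds_one_factor_cover[OF assms(1,2,4)] .
  have "int (card \<F>) \<le> C" using \<F>(5) assms(5) by linarith
  then obtain A :: "nat \<Rightarrow> nat \<Rightarrow> int" where "is_adjacency n E A"
    "\<forall>i<n. (\<Sum>j<n. A i j) = C" "\<forall>j<n. (\<Sum>i<n. A i j) = C"
    using regular_weights_of_one_factors[OF \<F>(1-3)] \<F>(4) by blast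
  then show ?thesis using assms(3) unfolding regular_def by blast
qed

end
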